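(* As formal power series in $x$, $$\sum_{n\ge 0}\left\langle {n \atop 2}\right\rangle_{\!2}x^n=\frac{x^2-x^3-x^4-3x^5+5x^6}{(1-x)^3(1-2x)^2(1-5x+5x^2)}.$$
   Context: A $c$-rook placement on an $n\times n$ board is a placement of $cn$ rooks on the cells, several rooks being allowed in the same cell, such that every row and every column contains exactly $c$ rooks (equivalently, an $n\times n$ matrix of nonnegative integers with all row and column sums equal to $c$). A drop is a rook lying strictly below the main diagonal, i.e.\ in a cell $(i,j)$ (row $i$, column $j$) with $i>j$, counted with multiplicity. The generalized Eulerian number $\left\langle {n \atop k}\right\rangle_{\!c}$ is the number of $c$-rook placements on the $n\times n$ board with exactly $k$ drops; for $n=0$ (empty board, only zero drops possible) $\left\langle {0 \atop k}\right\rangle_{\!c}=0$ when $k\ge1$. *)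

theory Defs
  imports Main "HOL-Computational_Algebra.Formal_Power_Series"
begin

definition rook_placements :: "nat \<Rightarrow> nat \<Rightarrow> (nat \<Rightarrow> nat \<Rightarrow> nat) set" where
  "rook_placements c n =
     {A. (\<forall>i j. (n \<le> i \<or> n \<le> j) \<longrightarrow> A i j = 0)
       \<and> (\<forall>i<n. (\<Sum>j<n. A i j) = c)
       \<and> (\<forall>j<n. (\<Sum>i<n. A i j) = c)}"

definition drops :: "nat \<Rightarrow> (nat \<Rightarrow> nat \<Rightarrow> nat) \<Rightarrow> nat" where
  "drops n A = (\<Sum>i<n. \<Sum>j<i. A i j)"

definition gen_eulerian :: "nat \<Rightarrow> nat \<Rightarrow> nat \<Rightarrow> nat" where
  "gen_eulerian c n k = card {A \<in> rook_placements c n. drops n A = k}"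

end

theory Submission
  imports Defs
begin

unbundle fps_syntax

text \<open>Count the placements by peeling off the last row and column. The rooks of the last row
  left of the diagonal are drops; they are removed from the board and remembered as rooks still
  owed to their columns, and likewise the rooks of the last column above the diagonal become
  rooks owed to their rows. The rooks owed to columns are themselves drops, and their total
  equals the total owed to rows, so with at most two drops the bookkeeping stays finite: the
  owed rooks are kept in two slots per side (each slot holding rooks of a single peeled line),
  and only the slot totals and the number of drops still to be placed matter. This gives a
  transfer recursion on twelve reachable states whose generating functions satisfy a linear
  system; solving it yields the rational function.\<close>

type_synonym state = "nat \<times> nat \<times> nat \<times> nat \<times> nat"
type_synonym corner = "nat \<times> nat \<times> nat \<times> nat \<times> nat"
type_synonym bordered_matrix =
  "(nat \<Rightarrow> nat \<Rightarrow> nat) \<times> (bool \<Rightarrow> nat \<Rightarrow> nat) \<times> (nat \<Rightarrow> bool \<Rightarrow> nat)"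

text \<open>A bordered matrix \<open>(A, X, Y)\<close> carries, besides the board \<open>A\<close>, the number \<open>X s j\<close> of
  rooks owed to column \<open>j\<close> in slot \<open>s\<close> and the number \<open>Y i s\<close> owed to row \<open>i\<close> in slot \<open>s\<close>.
  A state \<open>(xT, xF, yT, yF, k)\<close> prescribes the slot totals and the number \<open>k\<close> of drops of \<open>A\<close>.\<close>

definition partial_placements :: "nat \<Rightarrow> state \<Rightarrow> bordered_matrix set" where
  "partial_placements n st = (case st of (xT, xF, yT, yF, k) \<Rightarrow> {(A, X, Y).
     (\<forall>i j. n \<le> i \<or> n \<le> j \<longrightarrow> A i j = 0) \<and> (\<forall>s j. n \<le> j \<longrightarrow> X s j = 0) \<and>
     (\<forall>i s. n \<le> i \<longrightarrow> Y i s = 0) \<and>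
     (\<forall>i<n. (\<Sum>j<n. A i j) + Y i True + Y i False = 2) \<and>
     (\<forall>j<n. (\<Sum>i<n. A i j) + X True j + X False j = 2) \<and>
     (\<Sum>j<n. X True j) = xT \<and> (\<Sum>j<n. X False j) = xF \<and>
     (\<Sum>i<n. Y i True) = yT \<and> (\<Sum>i<n. Y i False) = yF \<and> drops n A = k})"

definition in_budget :: "state \<Rightarrow> bool" where
  "in_budget st = (case st of (xT, xF, yT, yF, k) \<Rightarrow> xT + xF + k \<le> 2 \<and> yT + yF + k \<le> 2)"

definition corner :: "nat \<Rightarrow> bordered_matrix \<Rightarrow> corner" where
  "corner m B = (case B of (A, X, Y) \<Rightarrow> (A m m, Y m True, Y m False, X True m, X False m))"

text \<open>Row \<open>m\<close> holds \<open>d\<close> rooks on the diagonal, is owed \<open>uT + uF\<close> rooks from peeled columns,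
  and its remaining rooks lie left of the diagonal; dually for column \<open>m\<close>.\<close>

definition left_count :: "corner \<Rightarrow> nat" where
  "left_count ch = (case ch of (d, uT, uF, vT, vF) \<Rightarrow> 2 - (d + uT + uF))"

definition upper_count :: "corner \<Rightarrow> nat" where
  "upper_count ch = (case ch of (d, uT, uF, vT, vF) \<Rightarrow> 2 - (d + vT + vF))"

text \<open>Peeling row \<open>m\<close> needs a slot that becomes empty once column \<open>m\<close> has taken its owed
  rooks; the left part of row \<open>m\<close> is stored in that slot (slot \<open>True\<close> whenever it qualifies).\<close>

definition admissible :: "state \<Rightarrow> corner \<Rightarrow> bool" where
  "admissible st ch = (case st of (xT, xF, yT, yF, k) \<Rightarrow> case ch of (d, uT, uF, vT, vF) \<Rightarrow>
     d + uT + uF \<le> 2 \<and> d + vT + vF \<le> 2 \<and> uT \<le> yT \<and> uF \<le> yF \<and> vT \<le> xT \<and> vF \<le> xF \<and>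
     left_count ch \<le> k \<and> (0 < left_count ch \<longrightarrow> xT = vT \<or> xF = vF) \<and>
     (0 < upper_count ch \<longrightarrow> yT = uT \<or> yF = uF))"

definition next_state :: "state \<Rightarrow> corner \<Rightarrow> state" where
  "next_state st ch = (case st of (xT, xF, yT, yF, k) \<Rightarrow> case ch of (d, uT, uF, vT, vF) \<Rightarrow>
     (xT - vT + (if xT = vT then left_count ch else 0),
      xF - vF + (if xT = vT then 0 else left_count ch),
      yT - uT + (if yT = uT then upper_count ch else 0),
      yF - uF + (if yT = uT then 0 else upper_count ch),
      k - left_count ch))"

definition corner_range :: "state \<Rightarrow> corner set" where
  "corner_range st = (case st of (xT, xF, yT, yF, k) \<Rightarrow>
     {..2} \<times> {..yT} \<times> {..yF} \<times> {..xT} \<times> {..xF})"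

fun peel_count :: "nat \<Rightarrow> state \<Rightarrow> nat" where
  "peel_count 0 st = (if st = (0, 0, 0, 0, 0) then 1 else 0)"
| "peel_count (Suc m) st = (\<Sum>ch\<in>corner_range st.
     if admissible st ch then peel_count m (next_state st ch) else 0)"

definition peel :: "nat \<Rightarrow> state \<Rightarrow> bordered_matrix \<Rightarrow> bordered_matrix" where
  "peel m st B = (case st of (xT, _, yT, _) \<Rightarrow> case B of (A, X, Y) \<Rightarrow>
     ((\<lambda>i j. if i < m \<and> j < m then A i j else 0),
      (\<lambda>s j. if j < m then X s j + (if s = (xT = X True m) then A m j else 0) else 0),
      (\<lambda>i s. if i < m then Y i s + (if s = (yT = Y m True) then A i m else 0) else 0)))"

definition restore :: "nat \<Rightarrow> state \<Rightarrow> corner \<Rightarrow> bordered_matrix \<Rightarrow> bordered_matrix" where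
  "restore m st ch B = (case st of (xT, _, yT, _) \<Rightarrow> case ch of (d, uT, uF, vT, vF) \<Rightarrow>
     case B of (A, X, Y) \<Rightarrow>
     ((\<lambda>i j. if i < m \<and> j < m then A i j
        else if i = m \<and> j < m then (if 0 < left_count ch then X (xT = vT) j else 0)
        else if i < m \<and> j = m then (if 0 < upper_count ch then Y i (yT = uT) else 0)
        else if i = m \<and> j = m then d else 0),
      (\<lambda>s j. if j < m then (if 0 < left_count ch \<and> s = (xT = vT) then 0 else X s j)
        else if j = m then (if s then vT else vF) else 0),
      (\<lambda>i s. if i < m then (if 0 < upper_count ch \<and> s = (yT = uT) then 0 else Y i s)
        else if i = m then (if s then uT else uF) else 0)))"

lemma drops_Suc: "drops (Suc m) A = drops m A + (\<Sum>j<m. A m j)"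
  by (simp add: drops_def)

lemma drops_cong:
  "(\<And>i j. i < m \<Longrightarrow> j < m \<Longrightarrow> A i j = B i j) \<Longrightarrow> drops m A = drops m B"
  unfolding drops_def by (intro sum.cong refl) auto

lemma mem_partial_placements_iff:
  "(A, X, Y) \<in> partial_placements n (xT, xF, yT, yF, k) \<longleftrightarrow>
     (\<forall>i j. n \<le> i \<or> n \<le> j \<longrightarrow> A i j = 0) \<and> (\<forall>s j. n \<le> j \<longrightarrow> X s j = 0) \<and>
     (\<forall>i s. n \<le> i \<longrightarrow> Y i s = 0) \<and>
     (\<forall>i<n. (\<Sum>j<n. A i j) + Y i True + Y i False = 2) \<and>
     (\<forall>j<n. (\<Sum>i<n. A i j) + X True j + X False j = 2) \<and>
     (\<Sum>j<n. X True j) = xT \<and> (\<Sum>j<n. X False j) = xF \<and>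
     (\<Sum>i<n. Y i True) = yT \<and> (\<Sum>i<n. Y i False) = yF \<and> drops n A = k"
  by (simp add: partial_placements_def)

lemma partial_placements_SucD:
  assumes "(A, X, Y) \<in> partial_placements (Suc m) (xT, xF, yT, yF, k)"
  shows "i < m \<Longrightarrow> (\<Sum>j<m. A i j) + A i m + Y i True + Y i False = 2"
    and "j < m \<Longrightarrow> (\<Sum>i<m. A i j) + A m j + X True j + X False j = 2"
    and "(\<Sum>j<m. A m j) + A m m + Y m True + Y m False = 2"
    and "(\<Sum>i<m. A i m) + A m m + X True m + X False m = 2"
    and "(\<Sum>j<m. X True j) + X True m = xT" "(\<Sum>j<m. X False j) + X False m = xF"
    and "(\<Sum>i<m. Y i True) + Y m True = yT" "(\<Sum>i<m. Y i False) + Y m False = yF"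
    and "drops m A + (\<Sum>j<m. A m j) = k"
  using assms by (auto simp: mem_partial_placements_iff sum.lessThan_Suc drops_Suc)

lemma admissible_corner:
  assumes B: "B \<in> partial_placements (Suc m) st" and "in_budget st"
  shows "admissible st (corner m B) \<and> corner m B \<in> corner_range st"
proof -
  obtain A X Y where [simp]: "B = (A, X, Y)" by (cases B)
  obtain xT xF yT yF k where [simp]: "st = (xT, xF, yT, yF, k)" by (cases st)
  have arith: "admissible st (d, uT, uF, vT, vF) \<and> d \<le> 2"
    if "l + d + uT + uF = 2" "u + d + vT + vF = 2" "x1 + vT = xT" "x0 + vF = xF"
      "y1 + uT = yT" "y0 + uF = yF" "k' + l = k" for l u x1 x0 y1 y0 k' d uT uF vT vF :: nat
    using that \<open>in_budget st\<close>
    by (auto simp: admissible_def in_budget_def left_count_def upper_count_def)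
  show ?thesis
    using arith[OF partial_placements_SucD(3-9)[OF B[simplified]]]
    by (simp add: corner_def corner_range_def admissible_def)
qed

lemma sum_lessThan_if_lt [simp]:
  "(\<Sum>j<m. if i < m \<and> j < m then f j else (0::nat)) = (if i < m then \<Sum>j<m. f j else 0)"
  "(\<Sum>i<m. if i < m \<and> j < m then f i else (0::nat)) = (if j < m then \<Sum>i<m. f i else 0)"
  by (auto intro: sum.cong)

lemma peel_mem:
  assumes B: "B \<in> partial_placements (Suc m) st"
  shows "peel m st B \<in> partial_placements m (next_state st (corner m B))"
proof -
  obtain A X Y where [simp]: "B = (A, X, Y)" by (cases B)
  obtain xT xF yT yF k where [simp]: "st = (xT, xF, yT, yF, k)" by (cases st)
  note row = partial_placements_SucD(1)[OF B[simplified]]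
    and col = partial_placements_SucD(2)[OF B[simplified]]
    and last = partial_placements_SucD(3-9)[OF B[simplified]]
  have "drops m (\<lambda>i j. if i < m \<and> j < m then A i j else 0) = drops m A"
    by (rule drops_cong) auto
  then show ?thesis
    unfolding peel_def corner_def next_state_def left_count_def upper_count_def
    apply (simp only: \<open>B = (A, X, Y)\<close> \<open>st = (xT, xF, yT, yF, k)\<close> prod.case
        mem_partial_placements_iff)
    apply (intro conjI)
    subgoal by auto
    subgoal by auto
    subgoal by auto
    subgoal using row by (cases "yT = Y m True") (auto simp: sum.distrib add_ac)
    subgoal using col by (cases "xT = X True m") (auto simp: sum.distrib add_ac)
    subgoal using last by (cases "xT = X True m") (auto simp: sum.distrib)
    subgoal using last by (cases "xT = X True m") (auto simp: sum.distrib)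
    subgoal using last by (cases "yT = Y m True") (auto simp: sum.distrib)
    subgoal using last by (cases "yT = Y m True") (auto simp: sum.distrib)
    subgoal using last by simp
    done
qed

lemma corner_restore: "corner m (restore m st ch B) = ch"
  by (simp add: restore_def corner_def split: prod.splits)

lemma slot_sum_next_state:
  assumes "(A', X', Y') \<in> partial_placements m (next_state (xT, xF, yT, yF, k) ch)"
    and "admissible (xT, xF, yT, yF, k) ch" and "ch = (d, uT, uF, vT, vF)"
  shows "0 < left_count ch \<Longrightarrow> (\<Sum>j<m. X' (xT = vT) j) = left_count ch"
    and "0 < upper_count ch \<Longrightarrow> (\<Sum>i<m. Y' i (yT = uT)) = upper_count ch"
  using assms
  by (auto simp: mem_partial_placements_iff next_state_def admissible_def split: if_splits)

lemma restore_mem: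
  assumes B': "B' \<in> partial_placements m (next_state st ch)" and adm: "admissible st ch"
  shows "restore m st ch B' \<in> partial_placements (Suc m) st"
proof -
  obtain A' X' Y' where [simp]: "B' = (A', X', Y')" by (cases B')
  obtain xT xF yT yF k where [simp]: "st = (xT, xF, yT, yF, k)" by (cases st)
  obtain d uT uF vT vF where ch: "ch = (d, uT, uF, vT, vF)" by (cases ch)
  define l where "l = left_count ch"
  define u where "u = upper_count ch"
  define ps where "ps = (xT = vT)"
  define pc where "pc = (yT = uT)"
  have l_eq: "l = 2 - (d + uT + uF)" and u_eq: "u = 2 - (d + vT + vF)"
    by (simp_all add: l_def u_def left_count_def upper_count_def ch)
  define A where "A = (\<lambda>i j. if i < m \<and> j < m then A' i j
     else if i = m \<and> j < m then (if 0 < l then X' ps j else 0)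
     else if i < m \<and> j = m then (if 0 < u then Y' i pc else 0)
     else if i = m \<and> j = m then d else 0)"
  define X where "X = (\<lambda>s j. if j < m then (if 0 < l \<and> s = ps then 0 else X' s j)
     else if j = m then (if s then vT else vF) else 0)"
  define Y where "Y = (\<lambda>i s. if i < m then (if 0 < u \<and> s = pc then 0 else Y' i s)
     else if i = m then (if s then uT else uF) else 0)"
  have restore_eq: "restore m st ch B' = (A, X, Y)"
    unfolding restore_def A_def X_def Y_def ps_def pc_def l_def u_def ch by simp
  have adm': "d + uT + uF \<le> 2" "d + vT + vF \<le> 2" "uT \<le> yT" "uF \<le> yF" "vT \<le> xT" "vF \<le> xF"
    "l \<le> k" "0 < l \<Longrightarrow> xT = vT \<or> xF = vF" "0 < u \<Longrightarrow> yT = uT \<or> yF = uF"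
    using adm by (simp_all add: admissible_def ch l_def u_def)
  have "next_state st ch = (xT - vT + (if ps then l else 0), xF - vF + (if ps then 0 else l),
      yT - uT + (if pc then u else 0), yF - uF + (if pc then 0 else u), k - l)"
    by (simp add: next_state_def ch l_def u_def ps_def pc_def)
  note O = B'[unfolded this, simplified, unfolded mem_partial_placements_iff]
  have row: "\<And>i. i < m \<Longrightarrow> (\<Sum>j<m. A' i j) + Y' i True + Y' i False = 2"
    and col: "\<And>j. j < m \<Longrightarrow> (\<Sum>i<m. A' i j) + X' True j + X' False j = 2"
    and xt: "(\<Sum>j<m. X' True j) = xT - vT + (if ps then l else 0)"
    and xf: "(\<Sum>j<m. X' False j) = xF - vF + (if ps then 0 else l)"
    and yt: "(\<Sum>i<m. Y' i True) = yT - uT + (if pc then u else 0)"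
    and yf: "(\<Sum>i<m. Y' i False) = yF - uF + (if pc then 0 else u)"
    and dk: "drops m A' = k - l"
    using O by blast+
  note slot_sums = slot_sum_next_state[OF B'[simplified] adm[simplified] ch,
      folded l_def u_def ps_def pc_def]
  have inner: "\<And>i j. i < m \<Longrightarrow> j < m \<Longrightarrow> A i j = A' i j" by (simp add: A_def)
  have rowA: "\<And>i. i < m \<Longrightarrow> (\<Sum>j<m. A i j) = (\<Sum>j<m. A' i j)"
    and colA: "\<And>j. j < m \<Longrightarrow> (\<Sum>i<m. A i j) = (\<Sum>i<m. A' i j)"
    by (auto simp: inner intro: sum.cong)
  have left_sum: "(\<Sum>j<m. A m j) = l"
    using slot_sums(1) by (cases "0 < l") (auto simp: A_def intro!: sum.neutral)
  have upper_sum: "(\<Sum>i<m. A i m) = u"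
    using slot_sums(2) by (cases "0 < u") (auto simp: A_def intro!: sum.neutral)
  have X_sums: "(\<Sum>j<m. X True j) = (if 0 < l \<and> ps then 0 else \<Sum>j<m. X' True j)"
      "(\<Sum>j<m. X False j) = (if 0 < l \<and> \<not> ps then 0 else \<Sum>j<m. X' False j)"
    by (auto simp: X_def intro!: sum.neutral)
  have Y_sums: "(\<Sum>i<m. Y i True) = (if 0 < u \<and> pc then 0 else \<Sum>i<m. Y' i True)"
      "(\<Sum>i<m. Y i False) = (if 0 < u \<and> \<not> pc then 0 else \<Sum>i<m. Y' i False)"
    by (auto simp: Y_def intro!: sum.neutral)
  have "drops m A = drops m A'" by (rule drops_cong) (simp add: inner)
  have "(A, X, Y) \<in> partial_placements (Suc m) st"
    unfolding \<open>st = _\<close> mem_partial_placements_iff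
  proof (intro conjI allI impI)
    show "\<And>i j. Suc m \<le> i \<or> Suc m \<le> j \<Longrightarrow> A i j = 0" by (auto simp: A_def)
    show "\<And>s j. Suc m \<le> j \<Longrightarrow> X s j = 0" by (auto simp: X_def)
    show "\<And>i s. Suc m \<le> i \<Longrightarrow> Y i s = 0" by (auto simp: Y_def)
  next
    fix i assume "i < Suc m"
    then consider "i < m" | "i = m" by linarith
    then show "(\<Sum>j<Suc m. A i j) + Y i True + Y i False = 2"
    proof cases
      case 1
      then show ?thesis using row[OF 1] rowA[OF 1]
        by (cases "0 < u"; cases pc) (auto simp: Y_def A_def)
    next
      case 2
      then show ?thesis using left_sum adm'(1) by (simp add: Y_def A_def l_eq)
    qed
  next
    fix j assume "j < Suc m"
    then consider "j < m" | "j = m" by linarith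
    then show "(\<Sum>i<Suc m. A i j) + X True j + X False j = 2"
    proof cases
      case 1
      then show ?thesis using col[OF 1] colA[OF 1]
        by (cases "0 < l"; cases ps) (auto simp: X_def A_def)
    next
      case 2
      then show ?thesis using upper_sum adm'(2) by (simp add: X_def A_def u_eq)
    qed
  next
    show "(\<Sum>j<Suc m. X True j) = xT" using X_sums(1) xt adm'(5) by (auto simp: X_def ps_def)
    show "(\<Sum>j<Suc m. X False j) = xF" using X_sums(2) xf adm'(6,8) by (auto simp: X_def ps_def)
    show "(\<Sum>i<Suc m. Y i True) = yT" using Y_sums(1) yt adm'(3) by (auto simp: Y_def pc_def)
    show "(\<Sum>i<Suc m. Y i False) = yF" using Y_sums(2) yf adm'(4,9) by (auto simp: Y_def pc_def)
    show "drops (Suc m) A = k"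
      using \<open>drops m A = drops m A'\<close> dk left_sum adm'(7) by (simp add: drops_Suc)
  qed
  with restore_eq show ?thesis by simp
qed

lemma restore_peel:
  assumes B: "B \<in> partial_placements (Suc m) st" and "in_budget st"
  shows "restore m st (corner m B) (peel m st B) = B"
proof -
  obtain A X Y where [simp]: "B = (A, X, Y)" by (cases B)
  obtain xT xF yT yF k where [simp]: "st = (xT, xF, yT, yF, k)" by (cases st)
  note O = B[simplified, unfolded mem_partial_placements_iff]
  have sA: "\<And>i j. Suc m \<le> i \<or> Suc m \<le> j \<Longrightarrow> A i j = 0"
    and sX: "\<And>s j. Suc m \<le> j \<Longrightarrow> X s j = 0"
    and sY: "\<And>i s. Suc m \<le> i \<Longrightarrow> Y i s = 0"
    using O by blast+
  note sums = partial_placements_SucD(3-8)[OF B[simplified]]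
  define l where "l = left_count (corner m B)"
  define u where "u = upper_count (corner m B)"
  define ps where "ps = (xT = X True m)"
  define pc where "pc = (yT = Y m True)"
  have l_sum: "(\<Sum>j<m. A m j) = l" and u_sum: "(\<Sum>i<m. A i m) = u"
    using sums by (simp_all add: l_def u_def left_count_def upper_count_def corner_def)
  have slots: "0 < l \<Longrightarrow> xT = X True m \<or> xF = X False m"
      "0 < u \<Longrightarrow> yT = Y m True \<or> yF = Y m False"
    using admissible_corner[OF B \<open>in_budget st\<close>]
    by (auto simp: admissible_def corner_def l_def u_def)
  have X_slot: "X ps j = 0" if "0 < l" "j < m" for j
  proof -
    have "(\<Sum>j<m. X ps j) = 0"
      using slots(1)[OF \<open>0 < l\<close>] sums unfolding ps_def by (cases "xT = X True m") auto
    then show ?thesis using \<open>j < m\<close> by simp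
  qed
  have Y_slot: "Y i pc = 0" if "0 < u" "i < m" for i
  proof -
    have "(\<Sum>i<m. Y i pc) = 0"
      using slots(2)[OF \<open>0 < u\<close>] sums unfolding pc_def by (cases "yT = Y m True") auto
    then show ?thesis using \<open>i < m\<close> by simp
  qed
  have left_zero: "A m j = 0" if "l = 0" "j < m" for j using l_sum that by simp
  have upper_zero: "A i m = 0" if "u = 0" "i < m" for i using u_sum that by simp
  have "restore m st (corner m B) (peel m st B) =
    ((\<lambda>i j. if i < m \<and> j < m then A i j
        else if i = m \<and> j < m then (if 0 < l then X ps j + A m j else 0)
        else if i < m \<and> j = m then (if 0 < u then Y i pc + A i m else 0)
        else if i = m \<and> j = m then A m m else 0),
      (\<lambda>s j. if j < m then (if 0 < l \<and> s = ps then 0 else X s j + (if s = ps then A m j else 0))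
        else if j = m then X s m else 0),
      (\<lambda>i s. if i < m then (if 0 < u \<and> s = pc then 0 else Y i s + (if s = pc then A i m else 0))
        else if i = m then Y m s else 0))"
    unfolding restore_def peel_def l_def u_def ps_def pc_def by (auto simp: corner_def fun_eq_iff)
  also have "\<dots> = (A, X, Y)"
    by (auto simp: fun_eq_iff not_less X_slot Y_slot left_zero upper_zero sA sX sY)
  finally show ?thesis by simp
qed

lemma peel_restore:
  assumes "B' \<in> partial_placements m st'"
  shows "peel m st (restore m st ch B') = B'"
proof -
  obtain A' X' Y' where [simp]: "B' = (A', X', Y')" by (cases B')
  obtain xT' xF' yT' yF' k' where [simp]: "st' = (xT', xF', yT', yF', k')" by (cases st')
  obtain xT xF yT yF k where [simp]: "st = (xT, xF, yT, yF, k)" by (cases st)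
  obtain d uT uF vT vF where [simp]: "ch = (d, uT, uF, vT, vF)" by (cases ch)
  have A': "\<And>i j. m \<le> i \<or> m \<le> j \<Longrightarrow> A' i j = 0"
    and X': "\<And>s j. m \<le> j \<Longrightarrow> X' s j = 0"
    and Y': "\<And>i s. m \<le> i \<Longrightarrow> Y' i s = 0"
    using assms by (auto simp: mem_partial_placements_iff)
  show ?thesis
    using A' X' Y' by (auto simp: restore_def peel_def fun_eq_iff not_less)
qed

lemma in_budget_next_state:
  assumes "admissible st ch" and "in_budget st"
  shows "in_budget (next_state st ch)"
proof -
  obtain xT xF yT yF k where [simp]: "st = (xT, xF, yT, yF, k)" by (cases st)
  obtain d uT uF vT vF where [simp]: "ch = (d, uT, uF, vT, vF)" by (cases ch)
  show ?thesis
    using assms by (auto simp: admissible_def in_budget_def next_state_def left_count_def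
        upper_count_def split: if_splits)
qed

lemma partial_placements_0:
  "partial_placements 0 st = (if st = (0, 0, 0, 0, 0) then {(\<lambda>_ _. 0, \<lambda>_ _. 0, \<lambda>_ _. 0)} else {})"
  by (cases st) (auto simp: partial_placements_def drops_def fun_eq_iff)

lemma bij_betw_peel:
  assumes "admissible st ch" and "in_budget st"
  shows "bij_betw (peel m st) {B \<in> partial_placements (Suc m) st. corner m B = ch}
    (partial_placements m (next_state st ch))"
proof (rule bij_betw_byWitness[where f' = "restore m st ch"])
  show "\<forall>B\<in>{B \<in> partial_placements (Suc m) st. corner m B = ch}.
      restore m st ch (peel m st B) = B"
    using restore_peel[OF _ \<open>in_budget st\<close>] by auto
  show "\<forall>B'\<in>partial_placements m (next_state st ch). peel m st (restore m st ch B') = B'"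
    using peel_restore by blast
  show "peel m st ` {B \<in> partial_placements (Suc m) st. corner m B = ch}
      \<subseteq> partial_placements m (next_state st ch)"
    by (auto dest: peel_mem)
  show "restore m st ch ` partial_placements m (next_state st ch)
      \<subseteq> {B \<in> partial_placements (Suc m) st. corner m B = ch}"
    by (auto intro: restore_mem[OF _ \<open>admissible st ch\<close>] simp: corner_restore)
qed

lemma card_partial_placements:
  assumes "in_budget st"
  shows "finite (partial_placements n st) \<and> card (partial_placements n st) = peel_count n st"
  using assms
proof (induction n arbitrary: st)
  case 0
  then show ?case by (simp add: partial_placements_0)
next
  case (Suc m)
  define fiber where "fiber ch = {B \<in> partial_placements (Suc m) st. corner m B = ch}" for ch
  have union: "partial_placements (Suc m) st = (\<Union>ch\<in>corner_range st. fiber ch)"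
    using admissible_corner[OF _ Suc.prems] unfolding fiber_def by fastforce
  have finite_range: "finite (corner_range st)"
    by (simp add: corner_range_def split: prod.splits)
  have fiber: "finite (fiber ch) \<and> card (fiber ch) =
      (if admissible st ch then peel_count m (next_state st ch) else 0)" for ch
  proof (cases "admissible st ch")
    case True
    then have "bij_betw (peel m st) (fiber ch) (partial_placements m (next_state st ch))"
      unfolding fiber_def using bij_betw_peel Suc.prems by blast
    with Suc.IH[OF in_budget_next_state[OF True Suc.prems]] True show ?thesis
      using bij_betw_finite bij_betw_same_card by metis
  next
    case False
    then have "fiber ch = {}"
      using admissible_corner[OF _ Suc.prems] unfolding fiber_def by fastforce
    with False show ?thesis by simp
  qed
  have "card (\<Union>ch\<in>corner_range st. fiber ch) = (\<Sum>ch\<in>corner_range st. card (fiber ch))"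
    by (rule card_UN_disjoint[OF finite_range]) (use fiber in \<open>auto simp: fiber_def\<close>)
  with union finite_range fiber show ?case by simp
qed

lemma gen_eulerian_2_eq_peel_count:
  assumes "k \<le> 2"
  shows "gen_eulerian 2 n k = peel_count n (0, 0, 0, 0, k)"
proof -
  have "partial_placements n (0, 0, 0, 0, k) =
      (\<lambda>A. (A, \<lambda>_ _. 0, \<lambda>_ _. 0)) ` {A \<in> rook_placements 2 n. drops n A = k}"
  proof (intro equalityI subsetI)
    fix B assume B: "B \<in> partial_placements n (0, 0, 0, 0, k)"
    obtain A X Y where [simp]: "B = (A, X, Y)" by (cases B)
    note O = B[simplified, unfolded mem_partial_placements_iff]
    have "X s j = 0" for s j
      using O by (cases "j < n"; cases s) auto
    moreover have "Y i s = 0" for i s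
      using O by (cases "i < n"; cases s) auto
    ultimately have "X = (\<lambda>_ _. 0)" "Y = (\<lambda>_ _. 0)" by (auto simp: fun_eq_iff)
    with O show "B \<in> (\<lambda>A. (A, \<lambda>_ _. 0, \<lambda>_ _. 0)) ` {A \<in> rook_placements 2 n. drops n A = k}"
      by (auto simp: rook_placements_def)
  qed (auto simp: mem_partial_placements_iff rook_placements_def)
  moreover have "in_budget (0, 0, 0, 0, k)" using assms by (simp add: in_budget_def)
  ultimately show ?thesis
    using card_partial_placements[of "(0, 0, 0, 0, k)" n]
    by (simp add: gen_eulerian_def card_image inj_on_def)
qed

lemma sum_corner_range:
  "(\<Sum>ch\<in>corner_range (xT, xF, yT, yF, k). f ch) =
    (\<Sum>d\<le>2. \<Sum>uT\<le>yT. \<Sum>uF\<le>yF. \<Sum>vT\<le>xT. \<Sum>vF\<le>xF. f (d, uT, uF, vT, vF))"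
  by (simp add: corner_range_def sum.cartesian_product)

lemma atMost_one_two_nat: "{..1::nat} = {0, 1}" "{..2::nat} = {0, 1, 2}"
  by auto

text \<open>The transfer recursion restricted to the twelve states reachable from \<open>(0, 0, 0, 0, 2)\<close>.\<close>

lemma peel_count_Suc_reachable:
  "peel_count (Suc m) (0, 0, 0, 0, 0) = peel_count m (0, 0, 0, 0, 0)"
  "peel_count (Suc m) (0, 0, 0, 0, 1) = peel_count m (1, 0, 1, 0, 0) + peel_count m (0, 0, 0, 0, 1)"
  "peel_count (Suc m) (0, 0, 0, 0, 2) =
    peel_count m (2, 0, 2, 0, 0) + peel_count m (1, 0, 1, 0, 1) + peel_count m (0, 0, 0, 0, 2)"
  "peel_count (Suc m) (0, 1, 0, 1, 0) =
    peel_count m (0, 1, 1, 0, 0) + peel_count m (0, 0, 0, 0, 0) + peel_count m (0, 1, 0, 1, 0)"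
  "peel_count (Suc m) (0, 1, 1, 0, 0) = 2 * peel_count m (0, 1, 1, 0, 0) + peel_count m (0, 0, 0, 0, 0)"
  "peel_count (Suc m) (1, 0, 0, 1, 0) =
    peel_count m (1, 0, 1, 0, 0) + peel_count m (0, 0, 0, 0, 0) + peel_count m (1, 0, 0, 1, 0)"
  "peel_count (Suc m) (1, 0, 1, 0, 0) = 2 * peel_count m (1, 0, 1, 0, 0) + peel_count m (0, 0, 0, 0, 0)"
  "peel_count (Suc m) (1, 0, 1, 0, 1) =
    peel_count m (1, 1, 2, 0, 0) + 2 * peel_count m (1, 0, 1, 0, 0) + peel_count m (1, 1, 1, 1, 0)
    + 2 * peel_count m (1, 0, 1, 0, 1) + peel_count m (0, 0, 0, 0, 1)"
  "peel_count (Suc m) (1, 1, 1, 1, 0) =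
    peel_count m (1, 1, 2, 0, 0) + 2 * peel_count m (1, 0, 1, 0, 0) + 2 * peel_count m (0, 1, 1, 0, 0)
    + peel_count m (0, 0, 0, 0, 0) + 3 * peel_count m (1, 1, 1, 1, 0) + peel_count m (1, 0, 0, 1, 0)
    + peel_count m (0, 1, 0, 1, 0)"
  "peel_count (Suc m) (1, 1, 2, 0, 0) =
    2 * peel_count m (1, 1, 2, 0, 0) + 2 * peel_count m (1, 0, 1, 0, 0) + 2 * peel_count m (0, 1, 1, 0, 0)
    + peel_count m (0, 0, 0, 0, 0) + peel_count m (1, 1, 1, 1, 0)"
  "peel_count (Suc m) (2, 0, 1, 1, 0) =
    peel_count m (2, 0, 2, 0, 0) + 2 * peel_count m (1, 0, 1, 0, 0) + peel_count m (0, 0, 0, 0, 0)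
    + 3 * peel_count m (2, 0, 1, 1, 0) + peel_count m (1, 0, 0, 1, 0)"
  "peel_count (Suc m) (2, 0, 2, 0, 0) =
    2 * peel_count m (2, 0, 2, 0, 0) + 2 * peel_count m (1, 0, 1, 0, 0) + peel_count m (0, 0, 0, 0, 0)
    + peel_count m (2, 0, 1, 1, 0)"
  by (simp_all add: sum_corner_range atMost_one_two_nat admissible_def next_state_def
      left_count_def upper_count_def flip: numeral_2_eq_2)

lemma peel_count_slot_symmetry:
  "peel_count n (0, 1, 1, 0, 0) = peel_count n (1, 0, 1, 0, 0)"
  "peel_count n (1, 0, 0, 1, 0) = peel_count n (1, 0, 1, 0, 0)"
  "peel_count n (0, 1, 0, 1, 0) = peel_count n (1, 0, 1, 0, 0)"
proof -
  show first: "peel_count n (0, 1, 1, 0, 0) = peel_count n (1, 0, 1, 0, 0)" for n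
  proof (induction n)
    case (Suc n)
    then show ?case unfolding peel_count_Suc_reachable by simp
  qed simp
  show "peel_count n (1, 0, 0, 1, 0) = peel_count n (1, 0, 1, 0, 0)"
  proof (induction n)
    case (Suc n)
    then show ?case unfolding peel_count_Suc_reachable by simp
  qed simp
  show "peel_count n (0, 1, 0, 1, 0) = peel_count n (1, 0, 1, 0, 0)"
  proof (induction n)
    case (Suc n)
    then show ?case unfolding peel_count_Suc_reachable first by simp
  qed simp
qed

definition peel_gf :: "state \<Rightarrow> rat fps" where
  "peel_gf st = Abs_fps (\<lambda>n. of_nat (peel_count n st))"

lemma fps_eqI_Suc:
  assumes "F $ 0 = G $ 0" and "\<And>n. F $ Suc n = G $ Suc n"
  shows "F = G"
proof (rule fps_ext)
  show "F $ n = G $ n" for n using assms by (cases n) simp_all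
qed

lemma peel_gf_system:
  defines "x \<equiv> fps_X :: rat fps"
  shows "peel_gf (0, 0, 0, 0, 0) = 1 + x * peel_gf (0, 0, 0, 0, 0)"
    and "peel_gf (0, 0, 0, 0, 1) = x * (peel_gf (1, 0, 1, 0, 0) + peel_gf (0, 0, 0, 0, 1))"
    and "peel_gf (0, 0, 0, 0, 2) =
      x * (peel_gf (2, 0, 2, 0, 0) + peel_gf (1, 0, 1, 0, 1) + peel_gf (0, 0, 0, 0, 2))"
    and "peel_gf (1, 0, 1, 0, 0) = x * (2 * peel_gf (1, 0, 1, 0, 0) + peel_gf (0, 0, 0, 0, 0))"
    and "peel_gf (1, 0, 1, 0, 1) = x * (peel_gf (1, 1, 2, 0, 0) + 2 * peel_gf (1, 0, 1, 0, 0)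
      + peel_gf (1, 1, 1, 1, 0) + 2 * peel_gf (1, 0, 1, 0, 1) + peel_gf (0, 0, 0, 0, 1))"
    and "peel_gf (1, 1, 1, 1, 0) = x * (peel_gf (1, 1, 2, 0, 0) + 6 * peel_gf (1, 0, 1, 0, 0)
      + peel_gf (0, 0, 0, 0, 0) + 3 * peel_gf (1, 1, 1, 1, 0))"
    and "peel_gf (1, 1, 2, 0, 0) = x * (2 * peel_gf (1, 1, 2, 0, 0) + 4 * peel_gf (1, 0, 1, 0, 0)
      + peel_gf (0, 0, 0, 0, 0) + peel_gf (1, 1, 1, 1, 0))"
    and "peel_gf (2, 0, 1, 1, 0) = x * (peel_gf (2, 0, 2, 0, 0) + 3 * peel_gf (1, 0, 1, 0, 0)
      + peel_gf (0, 0, 0, 0, 0) + 3 * peel_gf (2, 0, 1, 1, 0))"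
    and "peel_gf (2, 0, 2, 0, 0) = x * (2 * peel_gf (2, 0, 2, 0, 0) + 2 * peel_gf (1, 0, 1, 0, 0)
      + peel_gf (0, 0, 0, 0, 0) + peel_gf (2, 0, 1, 1, 0))"
  unfolding x_def
  \<comment> \<open>\<open>One_nat_def\<close> would turn the states' \<open>1\<close> into \<open>Suc 0\<close> before the recurrences match.\<close>
  by (rule fps_eqI_Suc;
      simp del: One_nat_def peel_count.simps(2)
        add: peel_gf_def numeral_fps_const peel_count_Suc_reachable peel_count_slot_symmetry)+

lemma transfer_system_solution:
  fixes x a b c p e g h i q :: "'a::idom"
  assumes A: "a = 1 + x * a" and B: "b = x * (p + b)" and C: "c = x * (q + e + c)"
    and P: "p = x * (2 * p + a)" and E: "e = x * (h + 2 * p + g + 2 * e + b)"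
    and G: "g = x * (h + 6 * p + a + 3 * g)" and H: "h = x * (2 * h + 4 * p + a + g)"
    and I: "i = x * (q + 3 * p + a + 3 * i)" and Q: "q = x * (2 * q + 2 * p + a + i)"
  shows "(1 - x)^3 * (1 - 2 * x)^2 * (1 - 5 * x + 5 * x^2) * c =
    x^2 - x^3 - x^4 - 3 * x^5 + 5 * x^6"
proof -
  define u where "u = 1 - x"
  define v where "v = 1 - 2 * x"
  define w where "w = 1 - 5 * x + 5 * x^2"
  have a: "u * a = 1" using A unfolding u_def by algebra
  have p: "u * v * p = x" using P a unfolding u_def v_def by algebra
  have "u * v * a = v" using a by algebra
  have q: "u * v * w * q = x * (1 - 3 * x) * (2 * x + v) + x^2 * (3 * x + v)"
  proof -
    have "w * q = (1 - 3 * x) * x * (2 * p + a) + x^2 * (3 * p + a)"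
      using I Q unfolding w_def by algebra
    then show ?thesis using p \<open>u * v * a = v\<close> by algebra
  qed
  have g: "u * v * w * g = v * x * (6 * x + v) + x^2 * (4 * x + v)"
  proof -
    have "w * g = v * x * (6 * p + a) + x^2 * (4 * p + a)"
      using G H unfolding w_def v_def by algebra
    then show ?thesis using p \<open>u * v * a = v\<close> by algebra
  qed
  have h: "u * v * w * h = (1 - 3 * x) * x * (4 * x + v) + x^2 * (6 * x + v)"
  proof -
    have "w * h = (1 - 3 * x) * x * (4 * p + a) + x^2 * (6 * p + a)"
      using G H unfolding w_def by algebra
    then show ?thesis using p \<open>u * v * a = v\<close> by algebra
  qed
  have b: "u^2 * v * b = x^2"
  proof -
    have "u * b = x * p" using B unfolding u_def by algebra
    then show ?thesis using p by algebra
  qed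
  have "u^2 * v^2 * w * e =
      x * (u * (u * v * w * h) + 2 * u * w * (u * v * p) + u * (u * v * w * g) + w * (u^2 * v * b))"
    using E unfolding v_def by algebra
  then have e: "u^2 * v^2 * w * e = x * (u * ((1 - 3 * x) * x * (4 * x + v) + x^2 * (6 * x + v))
      + 2 * u * w * x + u * (v * x * (6 * x + v) + x^2 * (4 * x + v)) + w * x^2)"
    unfolding g h b p .
  have "u^3 * v^2 * w * c = x * (u * v * (u * v * w * q) + u^2 * v^2 * w * e)"
    using C unfolding u_def by algebra
  then have "u^3 * v^2 * w * c = x * (u * v * (x * (1 - 3 * x) * (2 * x + v) + x^2 * (3 * x + v))
      + x * (u * ((1 - 3 * x) * x * (4 * x + v) + x^2 * (6 * x + v)) + 2 * u * w * x
      + u * (v * x * (6 * x + v) + x^2 * (4 * x + v)) + w * x^2))"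
    unfolding q e .
  then show ?thesis unfolding u_def v_def w_def by algebra
qed

theorem mainTheorem8:
  shows "Abs_fps (\<lambda>n. of_nat (gen_eulerian 2 n 2) :: rat) =
    (fps_X^2 - fps_X^3 - fps_X^4 - 3 * fps_X^5 + 5 * fps_X^6) /
    ((1 - fps_X)^3 * (1 - 2 * fps_X)^2 * (1 - 5 * fps_X + 5 * fps_X^2))"
proof -
  let ?den = "(1 - fps_X)^3 * (1 - 2 * fps_X)^2 * (1 - 5 * fps_X + 5 * fps_X^2) :: rat fps"
  have gf: "Abs_fps (\<lambda>n. of_nat (gen_eulerian 2 n 2) :: rat) = peel_gf (0, 0, 0, 0, 2)"
    by (simp add: peel_gf_def gen_eulerian_2_eq_peel_count)
  have solved: "?den * peel_gf (0, 0, 0, 0, 2) =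
      fps_X^2 - fps_X^3 - fps_X^4 - 3 * fps_X^5 + 5 * fps_X^6"
    by (rule transfer_system_solution[OF peel_gf_system])
  have "?den $ 0 = 1" by (simp add: fps_power_zeroth)
  then have "?den \<noteq> 0" by (metis fps_zero_nth zero_neq_one)
  then show ?thesis
    unfolding gf solved[symmetric] by simp
qed

end
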